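(* Every connected $4$-regular graph of order at least $7$ has a foresty minimum vertex cut.
   Context: All graphs are finite and simple. A vertex cut of a connected graph $G$ is a set $S\subset V(G)$ such that $G-S$ is disconnected. If $G$ has connectivity $k$, a vertex cut $S$ is called minimum if $|S|=k$. A vertex cut $S$ is called a foresty vertex cut if the induced subgraph $G[S]$ is a forest. *)

theory Defs
  imports Main
begin

definition simple_graph :: "'a set \<Rightarrow> ('a \<Rightarrow> 'a \<Rightarrow> bool) \<Rightarrow> bool" where
  "simple_graph V E \<longleftrightarrow> finite V \<and> (\<forall>x y. E x y \<longrightarrow> x \<in> V \<and> y \<in> V)
     \<and> (\<forall>x y. E x y \<longrightarrow> E y x) \<and> (\<forall>x. \<not> E x x)"

definition degree :: "('a \<Rightarrow> 'a \<Rightarrow> bool) \<Rightarrow> 'a \<Rightarrow> nat" where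
  "degree E x = card {y. E x y}"

definition regular :: "'a set \<Rightarrow> ('a \<Rightarrow> 'a \<Rightarrow> bool) \<Rightarrow> nat \<Rightarrow> bool" where
  "regular V E k \<longleftrightarrow> (\<forall>x\<in>V. degree E x = k)"

definition induced :: "('a \<Rightarrow> 'a \<Rightarrow> bool) \<Rightarrow> 'a set \<Rightarrow> 'a \<Rightarrow> 'a \<Rightarrow> bool" where
  "induced E S x y \<longleftrightarrow> E x y \<and> x \<in> S \<and> y \<in> S"

definition connected_graph :: "'a set \<Rightarrow> ('a \<Rightarrow> 'a \<Rightarrow> bool) \<Rightarrow> bool" where
  "connected_graph V E \<longleftrightarrow> V \<noteq> {} \<and> (\<forall>x\<in>V. \<forall>y\<in>V. (induced E V)\<^sup>*\<^sup>* x y)"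

definition disconnected_graph :: "'a set \<Rightarrow> ('a \<Rightarrow> 'a \<Rightarrow> bool) \<Rightarrow> bool" where
  "disconnected_graph V E \<longleftrightarrow> (\<exists>x\<in>V. \<exists>y\<in>V. \<not> (induced E V)\<^sup>*\<^sup>* x y)"

definition vertex_cut :: "'a set \<Rightarrow> ('a \<Rightarrow> 'a \<Rightarrow> bool) \<Rightarrow> 'a set \<Rightarrow> bool" where
  "vertex_cut V E S \<longleftrightarrow> S \<subseteq> V \<and> disconnected_graph (V - S) E"

definition min_vertex_cut :: "'a set \<Rightarrow> ('a \<Rightarrow> 'a \<Rightarrow> bool) \<Rightarrow> 'a set \<Rightarrow> bool" where
  "min_vertex_cut V E S \<longleftrightarrow> vertex_cut V E S \<and> (\<forall>T. vertex_cut V E T \<longrightarrow> card S \<le> card T)"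

definition is_cycle :: "'a set \<Rightarrow> ('a \<Rightarrow> 'a \<Rightarrow> bool) \<Rightarrow> 'a list \<Rightarrow> bool" where
  "is_cycle V E cs \<longleftrightarrow> length cs \<ge> 3 \<and> distinct cs \<and> set cs \<subseteq> V
     \<and> (\<forall>i < length cs. E (cs ! i) (cs ! ((i + 1) mod length cs)))"

definition forest :: "'a set \<Rightarrow> ('a \<Rightarrow> 'a \<Rightarrow> bool) \<Rightarrow> bool" where
  "forest V E \<longleftrightarrow> \<not> (\<exists>cs. is_cycle V E cs)"

definition foresty_vertex_cut :: "'a set \<Rightarrow> ('a \<Rightarrow> 'a \<Rightarrow> bool) \<Rightarrow> 'a set \<Rightarrow> bool" where
  "foresty_vertex_cut V E S \<longleftrightarrow> vertex_cut V E S \<and> forest S (induced E S)"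

end

theory Submission
  imports Defs
begin

text \<open>Take a minimum vertex cut S together with a side C (a union of components of G - S
  other than all of them) of least possible size. Every vertex of S has neighbours on both
  sides. If |C| \<ge> 2, minimality of C forces two neighbours in C (otherwise trading the vertex
  for its unique neighbour in C gives a minimum cut with a smaller side), so every vertex of S
  has at most one neighbour in S and G[S] is a matching. If C = {v}, then S = N(v) has four
  vertices, each with a neighbour outside N[v]; a cycle in G[N(v)] is then a triangle or a
  4-cycle, and in either case the neighbours just outside N[v] yield another four-vertex cut,
  at most two of whose vertices have more than one neighbour inside it. The bound |V| \<ge> 7
  ensures that these cuts leave vertices on both sides.\<close>

definition side :: "'a set \<Rightarrow> ('a \<Rightarrow> 'a \<Rightarrow> bool) \<Rightarrow> 'a set \<Rightarrow> 'a set \<Rightarrow> bool" where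
  "side V E S C \<longleftrightarrow> C \<subseteq> V - S \<and> C \<noteq> {} \<and> V - S - C \<noteq> {}
      \<and> (\<forall>x\<in>C. \<forall>y. E x y \<longrightarrow> y \<in> V - S \<longrightarrow> y \<in> C)"

lemma rtranclp_induced_closed:
  assumes "(induced E U)\<^sup>*\<^sup>* x y" "x \<in> C"
    and "\<And>x y. x \<in> C \<Longrightarrow> E x y \<Longrightarrow> y \<in> U \<Longrightarrow> y \<in> C"
  shows "y \<in> C"
  using assms by (induction rule: rtranclp_induct) (auto simp: induced_def)

lemma side_imp_vertex_cut:
  assumes "S \<subseteq> V" "side V E S C"
  shows "vertex_cut V E S"
proof -
  obtain x y where x: "x \<in> C" and y: "y \<in> V - S - C"
    using assms(2) unfolding side_def by blast
  have "\<not> (induced E (V - S))\<^sup>*\<^sup>* x y"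
    using rtranclp_induced_closed[of E "V - S" x y C] x y assms(2) unfolding side_def by blast
  moreover have "x \<in> V - S" using x assms(2) unfolding side_def by blast
  ultimately show ?thesis
    using assms(1) y unfolding vertex_cut_def disconnected_graph_def by blast
qed

lemma vertex_cut_imp_side:
  assumes "vertex_cut V E S"
  shows "\<exists>C. side V E S C"
proof -
  obtain x y where xy: "x \<in> V - S" "y \<in> V - S" "\<not> (induced E (V - S))\<^sup>*\<^sup>* x y"
    using assms unfolding vertex_cut_def disconnected_graph_def by blast
  define C where "C = {z. (induced E (V - S))\<^sup>*\<^sup>* x z}"
  have "C \<subseteq> V - S"
    using rtranclp_induced_closed[of E "V - S" x _ "V - S"] xy(1) unfolding C_def by blast
  moreover have "\<forall>z\<in>C. \<forall>w. E z w \<longrightarrow> w \<in> V - S \<longrightarrow> w \<in> C"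
  proof (intro ballI allI impI)
    fix z w assume "z \<in> C" "E z w" "w \<in> V - S"
    with \<open>C \<subseteq> V - S\<close> have "induced E (V - S) z w" unfolding induced_def by blast
    with \<open>z \<in> C\<close> show "w \<in> C" unfolding C_def by (simp add: rtranclp.rtrancl_into_rtrancl)
  qed
  moreover have "x \<in> C" "y \<in> V - S - C" using xy unfolding C_def by auto
  ultimately have "side V E S C" unfolding side_def by blast
  then show ?thesis ..
qed

lemma vertex_cut_if_closed_set:
  assumes "T \<subseteq> V" "X \<subseteq> V - T" "X \<noteq> {}" "finite (T \<union> X)" "card (T \<union> X) < card V"
    and "\<And>x y. x \<in> X \<Longrightarrow> E x y \<Longrightarrow> y \<in> X \<union> T"
  shows "vertex_cut V E T"
proof -
  have "\<not> V \<subseteq> T \<union> X"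
  proof
    assume "V \<subseteq> T \<union> X"
    then have "card V \<le> card (T \<union> X)" by (rule card_mono[OF assms(4)])
    with assms(5) show False by simp
  qed
  then have "side V E T X" using assms(2,3,6) unfolding side_def by blast
  with assms(1) show ?thesis by (rule side_imp_vertex_cut)
qed

lemma min_vertex_cut_if_card_le:
  assumes "min_vertex_cut V E S" "vertex_cut V E T" "card T \<le> card S"
  shows "min_vertex_cut V E T"
  using assms unfolding min_vertex_cut_def by (auto intro: order.trans)

lemma ex_min_vertex_cut: "vertex_cut V E T \<Longrightarrow> \<exists>S. min_vertex_cut V E S"
  using ex_has_least_nat[of "vertex_cut V E" T card] unfolding min_vertex_cut_def by blast

lemma is_cycle_pred_succ:
  assumes "is_cycle V F cs" "x \<in> set cs"
  obtains y z where "y \<in> set cs" "z \<in> set cs" "y \<noteq> z" "F y x" "F x z"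
proof -
  define L where "L = length cs"
  have L: "3 \<le> L" and dist: "distinct cs"
    and adj: "\<And>i. i < L \<Longrightarrow> F (cs ! i) (cs ! ((i + 1) mod L))"
    using assms(1) unfolding is_cycle_def L_def by auto
  obtain i where i: "i < L" "cs ! i = x" using assms(2) by (metis in_set_conv_nth L_def)
  define j where "j = (if i = 0 then L - 1 else i - 1)"
  define k where "k = (if i = L - 1 then 0 else i + 1)"
  have jk: "j < L" "k < L" "j \<noteq> k" unfolding j_def k_def using i L by auto
  have "(j + 1) mod L = i" "(i + 1) mod L = k"
    unfolding j_def k_def using i L by (auto simp: Suc_diff_Suc)
  then have "F (cs ! j) x" "F x (cs ! k)" using adj[of j] adj[of i] i jk by auto
  moreover have "cs ! j \<noteq> cs ! k" using jk dist nth_eq_iff_index_eq L_def by metis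
  moreover have "cs ! j \<in> set cs" "cs ! k \<in> set cs" using jk by (simp_all add: L_def)
  ultimately show thesis using that by blast
qed

lemma forest_induced_if_degree_le_1_outside:
  assumes sym: "\<And>x y. E x y \<Longrightarrow> E y x" and "finite W" "card W \<le> 2"
    and light: "\<And>x y z. x \<in> S - W \<Longrightarrow> y \<in> S \<Longrightarrow> z \<in> S \<Longrightarrow> E x y \<Longrightarrow> E x z \<Longrightarrow> y = z"
  shows "forest S (induced E S)"
  unfolding forest_def
proof
  assume "\<exists>cs. is_cycle S (induced E S) cs"
  then obtain cs where cyc: "is_cycle S (induced E S) cs" ..
  have "\<not> set cs \<subseteq> W"
  proof
    assume "set cs \<subseteq> W"
    then have "card (set cs) \<le> card W" by (rule card_mono[OF \<open>finite W\<close>])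
    with cyc assms(3) show False unfolding is_cycle_def by (simp add: distinct_card)
  qed
  then obtain x where x: "x \<in> set cs" "x \<notin> W" by blast
  obtain y z where "y \<noteq> z" "induced E S y x" "induced E S x z"
    using is_cycle_pred_succ[OF cyc x(1)] by blast
  then have "x \<in> S - W" "y \<in> S" "z \<in> S" "E x y" "E x z" "y \<noteq> z"
    using sym x(2) unfolding induced_def by auto
  then show False using light by blast
qed

lemma is_cycle_card_le_4_cases:
  assumes "is_cycle S F cs" "finite S" "card S \<le> 4"
  obtains (triangle) a b c where "distinct [a, b, c]" "F a b" "F b c" "F c a"
  | (square) a b c e where "distinct [a, b, c, e]" "F a b" "F b c" "F c e" "F e a"
proof -
  have L: "3 \<le> length cs" "length cs \<le> 4" and dist: "distinct cs"
    and adj: "\<And>i. i < length cs \<Longrightarrow> F (cs ! i) (cs ! ((i + 1) mod length cs))"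
    using assms card_mono[of S "set cs"] distinct_card[of cs] unfolding is_cycle_def by auto
  show thesis
  proof (cases "length cs = 3")
    case True
    then obtain a b c where cs: "cs = [a, b, c]" by (auto simp: length_Suc_conv numeral_eq_Suc)
    show thesis
    proof (rule triangle)
      show "distinct [a, b, c]" using dist unfolding cs .
      show "F a b" "F b c" "F c a" using adj[of 0] adj[of 1] adj[of 2] unfolding cs by simp_all
    qed
  next
    case False
    then have "length cs = 4" using L by simp
    then obtain a b c e where cs: "cs = [a, b, c, e]" by (auto simp: length_Suc_conv numeral_eq_Suc)
    show thesis
    proof (rule square)
      show "distinct [a, b, c, e]" using dist unfolding cs .
      show "F a b" "F b c" "F c e" "F e a"
        using adj[of 0] adj[of 1] adj[of 2] adj[of 3] unfolding cs by simp_all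
    qed
  qed
qed

locale sgraph =
  fixes V :: "'a set" and E :: "'a \<Rightarrow> 'a \<Rightarrow> bool"
  assumes simple: "simple_graph V E"
begin

lemma finite_V: "finite V"
  using simple unfolding simple_graph_def by blast

lemma adj_sym: "E x y \<Longrightarrow> E y x"
  using simple unfolding simple_graph_def by blast

lemma adj_in_V: "E x y \<Longrightarrow> x \<in> V" "E x y \<Longrightarrow> y \<in> V"
  using simple unfolding simple_graph_def by blast+

lemma adj_irrefl: "\<not> E x x"
  using simple unfolding simple_graph_def by blast

lemma finite_subset_V: "S \<subseteq> V \<Longrightarrow> finite S"
  by (rule finite_subset[OF _ finite_V])

lemma side_complement: "side V E S C \<Longrightarrow> side V E S (V - S - C)"
  unfolding side_def by (blast dest: adj_sym)

lemma min_cut_vertex_adj_side: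
  assumes m: "min_vertex_cut V E S" and sd: "side V E S C" and s: "s \<in> S"
  shows "\<exists>c\<in>C. E s c"
proof (rule ccontr)
  assume "\<not> (\<exists>c\<in>C. E s c)"
  with sd s have "side V E (S - {s}) C" unfolding side_def by (blast dest: adj_sym)
  moreover have S: "S \<subseteq> V" using m unfolding min_vertex_cut_def vertex_cut_def by blast
  ultimately have "vertex_cut V E (S - {s})" by (intro side_imp_vertex_cut) auto
  then have "card S \<le> card (S - {s})" using m unfolding min_vertex_cut_def by blast
  moreover have "card (S - {s}) < card S" using finite_subset_V[OF S] s by (rule card_Diff1_less)
  ultimately show False by simp
qed

lemma min_cut_exchange:
  assumes m: "min_vertex_cut V E S" and sd: "side V E S C" and s: "s \<in> S" and c: "c \<in> C"
    and unique: "\<And>y. y \<in> C \<Longrightarrow> E s y \<Longrightarrow> y = c" and "C - {c} \<noteq> {}"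
  shows "min_vertex_cut V E (insert c (S - {s})) \<and> side V E (insert c (S - {s})) (C - {c})"
proof -
  have S: "S \<subseteq> V" using m unfolding min_vertex_cut_def vertex_cut_def by blast
  have c': "c \<in> V" "c \<notin> S" using sd c unfolding side_def by blast+
  have sd': "side V E (insert c (S - {s})) (C - {c})"
    using sd s c' S unique \<open>C - {c} \<noteq> {}\<close> unfolding side_def by (blast dest: adj_sym)
  moreover have "card (insert c (S - {s})) = card S"
    using finite_subset_V[OF S] s c'(2) card_gt_0_iff[of S] by auto
  moreover have "vertex_cut V E (insert c (S - {s}))"
    using sd' S c'(1) by (intro side_imp_vertex_cut) auto
  ultimately show ?thesis using min_vertex_cut_if_card_le[OF m] by simp
qed

lemma neighbours_subset_if_singleton_side: "side V E S {v} \<Longrightarrow> {y. E v y} \<subseteq> S"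
  unfolding side_def using adj_in_V(2) adj_irrefl by blast

lemma obtain_min_cut_minimal_side:
  assumes "vertex_cut V E T"
  obtains S C where "min_vertex_cut V E S" "side V E S C"
    "\<And>S' C'. min_vertex_cut V E S' \<Longrightarrow> side V E S' C' \<Longrightarrow> card C \<le> card C'"
proof -
  obtain S0 where "min_vertex_cut V E S0" using ex_min_vertex_cut[OF assms] ..
  moreover obtain C0 where "side V E S0 C0"
    using vertex_cut_imp_side \<open>min_vertex_cut V E S0\<close> unfolding min_vertex_cut_def by blast
  ultimately show thesis
    using ex_has_least_nat[of "\<lambda>(S, C). min_vertex_cut V E S \<and> side V E S C" "(S0, C0)" "card \<circ> snd"]
      that by auto
qed

lemma min_cut_vertex_two_adj_minimal_side:
  assumes m: "min_vertex_cut V E S" and sd: "side V E S C" and "2 \<le> card C"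
    and least: "\<And>S' C'. min_vertex_cut V E S' \<Longrightarrow> side V E S' C' \<Longrightarrow> card C \<le> card C'"
    and s: "s \<in> S"
  obtains c1 c2 where "c1 \<in> C" "c2 \<in> C" "c1 \<noteq> c2" "E s c1" "E s c2"
proof -
  obtain c1 where c1: "c1 \<in> C" "E s c1" using min_cut_vertex_adj_side[OF m sd s] ..
  have "finite C" using sd finite_subset_V unfolding side_def by blast
  have "\<exists>c2\<in>C. c2 \<noteq> c1 \<and> E s c2"
  proof (rule ccontr)
    assume "\<not> ?thesis"
    then have unique: "\<And>y. y \<in> C \<Longrightarrow> E s y \<Longrightarrow> y = c1" by blast
    have "C \<noteq> {c1}" using \<open>2 \<le> card C\<close> by auto
    then have "C - {c1} \<noteq> {}" using c1(1) by blast
    then have "side V E (insert c1 (S - {s})) (C - {c1})" "min_vertex_cut V E (insert c1 (S - {s}))"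
      using min_cut_exchange[OF m sd s c1(1) unique] by blast+
    then have "card C \<le> card (C - {c1})" by (rule least[rotated])
    moreover have "card (C - {c1}) < card C" using \<open>finite C\<close> c1(1) by (rule card_Diff1_less)
    ultimately show False by simp
  qed
  then show thesis using that c1 by blast
qed

end

locale regular_sgraph = sgraph +
  fixes k :: nat
  assumes regular: "regular V E k"
begin

lemma card_neighbours: "x \<in> V \<Longrightarrow> card {y. E x y} = k"
  using regular unfolding regular_def degree_def by blast

lemma finite_neighbours: "finite {y. E x y}"
  using adj_in_V(2) by (blast intro: finite_subset_V)

lemma length_le_degree:
  assumes "x \<in> V" "distinct ys" "set ys \<subseteq> {y. E x y}"
  shows "length ys \<le> k"
  using card_mono[OF finite_neighbours assms(3)] card_neighbours[OF assms(1)]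
    distinct_card[OF assms(2)] by simp

lemma neighbours_eq_set:
  assumes "x \<in> V" "distinct ys" "length ys = k" "set ys \<subseteq> {y. E x y}"
  shows "{y. E x y} = set ys"
  using card_subset_eq[OF finite_neighbours assms(4)] card_neighbours[OF assms(1)]
    distinct_card[OF assms(2)] assms(3) by simp

lemma side_singleton:
  assumes "v \<in> V" "k + 2 \<le> card V"
  shows "side V E {y. E v y} {v}"
proof -
  have "\<not> V \<subseteq> insert v {y. E v y}"
  proof
    assume "V \<subseteq> insert v {y. E v y}"
    then have "card V \<le> card (insert v {y. E v y})" by (intro card_mono) (simp add: finite_neighbours)
    also have "\<dots> = k + 1" using card_neighbours[OF assms(1)] finite_neighbours adj_irrefl by simp
    finally show False using assms(2) by simp
  qed
  then show ?thesis unfolding side_def using assms(1) adj_irrefl by auto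
qed

lemma neighbourhood_vertex_cut: "v \<in> V \<Longrightarrow> k + 2 \<le> card V \<Longrightarrow> vertex_cut V E {y. E v y}"
  using side_singleton adj_in_V(2) by (blast intro: side_imp_vertex_cut)

lemma min_cut_eq_neighbours:
  assumes m: "min_vertex_cut V E S" and sd: "side V E S {v}" and "k + 2 \<le> card V"
  shows "S = {y. E v y}"
proof -
  have "v \<in> V" using sd unfolding side_def by blast
  then have "card S \<le> card {y. E v y}"
    using m neighbourhood_vertex_cut \<open>k + 2 \<le> card V\<close> unfolding min_vertex_cut_def by blast
  moreover have "finite S" using m finite_subset_V unfolding min_vertex_cut_def vertex_cut_def by blast
  moreover have N: "{y. E v y} \<subseteq> S" using sd by (rule neighbours_subset_if_singleton_side)
  ultimately have "{y. E v y} = S" using card_mono card_subset_eq by (metis le_antisym)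
  then show ?thesis ..
qed

end

locale four_regular = regular_sgraph V E 4 for V :: "'a set" and E
begin

lemma adj_iff_four_adj:
  assumes "x \<in> V" "distinct [p, q, r, t]" "E x p" "E x q" "E x r" "E x t"
  shows "E x y \<longleftrightarrow> y \<in> {p, q, r, t}"
  using neighbours_eq_set[of x "[p, q, r, t]"] assms by auto

lemma forest_min_cut_minimal_side:
  assumes m: "min_vertex_cut V E S" and sd: "side V E S C" and "2 \<le> card C"
    and least: "\<And>S' C'. min_vertex_cut V E S' \<Longrightarrow> side V E S' C' \<Longrightarrow> card C \<le> card C'"
  shows "forest S (induced E S)"
proof (rule forest_induced_if_degree_le_1_outside[of E "{}", OF adj_sym])
  fix s y z assume s: "s \<in> S - {}" and yz: "y \<in> S" "z \<in> S" "E s y" "E s z"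
  show "y = z"
  proof (rule ccontr)
    assume "y \<noteq> z"
    obtain c1 c2 where c: "c1 \<in> C" "c2 \<in> C" "c1 \<noteq> c2" "E s c1" "E s c2"
      using min_cut_vertex_two_adj_minimal_side[OF m sd \<open>2 \<le> card C\<close>, of s] least s by blast
    obtain d where d: "d \<in> V - S - C" "E s d"
      using min_cut_vertex_adj_side[OF m side_complement[OF sd]] s by blast
    have "distinct [y, z, c1, c2, d]" using sd yz c d \<open>y \<noteq> z\<close> unfolding side_def by auto
    then have "length [y, z, c1, c2, d] \<le> 4"
      by (rule length_le_degree[OF adj_in_V(1)[OF d(2)]]) (use yz c d in auto)
    then show False by simp
  qed
qed simp_all

end

locale neighbourhood_cut = four_regular +
  fixes v :: 'a
  assumes v_in_V: "v \<in> V" and seven_le_card_V: "7 \<le> card V"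
    and min_cut: "min_vertex_cut V E {y. E v y}"
begin

lemma card_ge_4_if_vertex_cut: "vertex_cut V E T \<Longrightarrow> 4 \<le> card T"
  using min_cut card_neighbours[OF v_in_V] unfolding min_vertex_cut_def by simp

lemma min_vertex_cut_if_separates:
  assumes "T \<subseteq> V" "card T \<le> 4" "X \<subseteq> V - T" "X \<noteq> {}" "card (T \<union> X) < card V"
    and "\<And>x y. x \<in> X \<Longrightarrow> E x y \<Longrightarrow> y \<in> X \<union> T"
  shows "min_vertex_cut V E T"
proof -
  have "finite (T \<union> X)" using assms(1,3) finite_subset_V by blast
  then have "vertex_cut V E T" using assms by (blast intro: vertex_cut_if_closed_set)
  then show ?thesis
    using min_vertex_cut_if_card_le[OF min_cut] assms(2) card_neighbours[OF v_in_V] by simp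
qed

lemma obtain_outer_neighbour:
  assumes "E v s"
  obtains d where "E s d" "d \<noteq> v" "\<not> E v d"
proof -
  have "side V E {y. E v y} {v}" using side_singleton v_in_V seven_le_card_V by simp
  then show thesis
    using min_cut_vertex_adj_side[OF min_cut side_complement] assms that by blast
qed

lemma obtain_fourth_neighbour:
  assumes "E v a" "E v b" "E v c" "distinct [a, b, c]"
  obtains e where "E v e" "distinct [a, b, c, e]"
proof -
  have "\<not> {y. E v y} \<subseteq> {a, b, c}"
  proof
    assume "{y. E v y} \<subseteq> {a, b, c}"
    then have "card {y. E v y} \<le> card {a, b, c}" by (rule card_mono[rotated]) simp
    also have "\<dots> \<le> 3" using card_length[of "[a, b, c]"] by simp
    finally show False using card_neighbours[OF v_in_V] by simp
  qed
  then obtain e where "E v e" "e \<notin> {a, b, c}" by blast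
  with assms(4) show thesis using that by auto
qed

text \<open>The cut {a, b, e, c'} separates {v, c}; inside it a is adjacent only to b and
  e only to c'.\<close>

lemma foresty_min_cut_triangle_unshared_outer:
  assumes va: "E v a" "E v b" "E v c" "distinct [a, b, c]"
    and tri: "E a b" "E b c" "E c a"
    and c': "E c c'" "c' \<noteq> v" "\<not> E v c'" and "\<not> E a c'"
  shows "\<exists>T. min_vertex_cut V E T \<and> foresty_vertex_cut V E T"
proof -
  obtain e where e: "E v e" "distinct [a, b, c, e]" using obtain_fourth_neighbour[OF va] .
  obtain a' where a': "E a a'" "a' \<noteq> v" "\<not> E v a'" using obtain_outer_neighbour[OF va(1)] .
  obtain b' where b': "E b b'" "b' \<noteq> v" "\<not> E v b'" using obtain_outer_neighbour[OF va(2)] .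
  note adj = va e a' b' c' tri adj_sym[OF tri(1)] adj_sym[OF tri(2)] adj_sym[OF tri(3)] adj_irrefl
  have Nv: "E v y \<longleftrightarrow> y \<in> {a, b, c, e}" for y
    by (rule adj_iff_four_adj) (use v_in_V adj in auto)
  have Na: "E a y \<longleftrightarrow> y \<in> {v, b, c, a'}" for y
    by (rule adj_iff_four_adj) (use adj adj_in_V in \<open>auto dest: adj_sym\<close>)
  have Nb: "E b y \<longleftrightarrow> y \<in> {v, a, c, b'}" for y
    by (rule adj_iff_four_adj) (use adj adj_in_V in \<open>auto dest: adj_sym\<close>)
  have Nc: "E c y \<longleftrightarrow> y \<in> {v, a, b, c'}" for y
    by (rule adj_iff_four_adj) (use adj adj_in_V in \<open>auto dest: adj_sym\<close>)
  have "min_vertex_cut V E {a, b, e, c'}"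
  proof (rule min_vertex_cut_if_separates[where X = "{v, c}"])
    show "{a, b, e, c'} \<subseteq> V" "{v, c} \<subseteq> V - {a, b, e, c'}" using adj adj_in_V by auto
    show "card {a, b, e, c'} \<le> 4" using card_length[of "[a, b, e, c']"] by simp
    show "card ({a, b, e, c'} \<union> {v, c}) < card V"
      using card_length[of "[v, c, a, b, e, c']"] seven_le_card_V by simp
    show "\<And>x y. x \<in> {v, c} \<Longrightarrow> E x y \<Longrightarrow> y \<in> {v, c} \<union> {a, b, e, c'}"
      using Nv Nc by blast
  qed simp
  moreover have "forest {a, b, e, c'} (induced E {a, b, e, c'})"
  proof (rule forest_induced_if_degree_le_1_outside[of E "{b, c'}", OF adj_sym])
    have "y = b" if "y \<in> {a, b, e, c'}" "E a y" for y
      using that adj \<open>\<not> E a c'\<close> by (auto simp: Na)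
    moreover have "y = c'" if "y \<in> {a, b, e, c'}" "E e y" for y
      using that adj adj_sym[of e a] adj_sym[of e b] by (auto simp: Na Nb)
    ultimately show "\<And>x y z. x \<in> {a, b, e, c'} - {b, c'} \<Longrightarrow> y \<in> {a, b, e, c'} \<Longrightarrow>
        z \<in> {a, b, e, c'} \<Longrightarrow> E x y \<Longrightarrow> E x z \<Longrightarrow> y = z"
      by blast
    show "card {b, c'} \<le> 2" using card_length[of "[b, c']"] by simp
  qed simp_all
  ultimately show ?thesis unfolding foresty_vertex_cut_def min_vertex_cut_def by blast
qed

lemma triangle_no_common_outer_neighbour:
  assumes va: "E v a" "E v b" "E v c" "distinct [a, b, c]"
    and tri: "E a b" "E b c" "E c a"
    and c': "E c c'" "c' \<noteq> v" "\<not> E v c'" and "E a c'" "E b c'"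
  shows False
proof -
  obtain e where e: "E v e" "distinct [a, b, c, e]" using obtain_fourth_neighbour[OF va] .
  note adj = va e c' tri adj_sym[OF tri(1)] adj_sym[OF tri(2)] adj_sym[OF tri(3)] adj_irrefl
    \<open>E a c'\<close> \<open>E b c'\<close>
  have Nv: "E v y \<longleftrightarrow> y \<in> {a, b, c, e}" for y
    by (rule adj_iff_four_adj) (use v_in_V adj in auto)
  have Na: "E a y \<longleftrightarrow> y \<in> {v, b, c, c'}" for y
    by (rule adj_iff_four_adj) (use adj adj_in_V in \<open>auto dest: adj_sym\<close>)
  have Nb: "E b y \<longleftrightarrow> y \<in> {v, a, c, c'}" for y
    by (rule adj_iff_four_adj) (use adj adj_in_V in \<open>auto dest: adj_sym\<close>)
  have Nc: "E c y \<longleftrightarrow> y \<in> {v, a, b, c'}" for y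
    by (rule adj_iff_four_adj) (use adj adj_in_V in \<open>auto dest: adj_sym\<close>)
  have "vertex_cut V E {e, c'}"
  proof (rule vertex_cut_if_closed_set[where X = "{v, a, b, c}"])
    show "{e, c'} \<subseteq> V" "{v, a, b, c} \<subseteq> V - {e, c'}" using adj adj_in_V by auto
    show "card ({e, c'} \<union> {v, a, b, c}) < card V"
      using card_length[of "[v, a, b, c, e, c']"] seven_le_card_V by simp
    show "\<And>x y. x \<in> {v, a, b, c} \<Longrightarrow> E x y \<Longrightarrow> y \<in> {v, a, b, c} \<union> {e, c'}"
      using Nv Na Nb Nc by blast
  qed simp_all
  then have "4 \<le> card {e, c'}" by (rule card_ge_4_if_vertex_cut)
  then show False using card_length[of "[e, c']"] by simp
qed

lemma foresty_min_cut_triangle: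
  assumes va: "E v a" "E v b" "E v c" "distinct [a, b, c]" and tri: "E a b" "E b c" "E c a"
  shows "\<exists>T. min_vertex_cut V E T \<and> foresty_vertex_cut V E T"
proof -
  obtain c' where c': "E c c'" "c' \<noteq> v" "\<not> E v c'" using obtain_outer_neighbour[OF va(3)] .
  consider "\<not> E a c'" | "\<not> E b c'" | "E a c'" "E b c'" by blast
  then show ?thesis
  proof cases
    case 1
    then show ?thesis using foresty_min_cut_triangle_unshared_outer[OF va tri c'] by blast
  next
    case 2
    have "distinct [b, a, c]" "E b a" "E a c" "E c b"
      using va(4) tri by (auto intro: adj_sym)
    then show ?thesis using foresty_min_cut_triangle_unshared_outer[of b a c c'] va c' 2 by blast
  next
    case 3
    then show ?thesis using triangle_no_common_outer_neighbour[OF va tri c'] by blast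
  qed
qed

lemma outer_neighbour_unique:
  assumes "E v x" "E v p" "E v q" "p \<noteq> q" "E x p" "E x q"
    and "E x w" "w \<noteq> v" "\<not> E v w" "E x w'" "w' \<noteq> v" "\<not> E v w'"
  shows "w = w'"
proof (rule ccontr)
  assume "w \<noteq> w'"
  with assms adj_irrefl have "distinct [v, p, q, w, w']" by auto
  then have "length [v, p, q, w, w'] \<le> 4"
    by (rule length_le_degree[OF adj_in_V(2)[OF assms(1)]]) (use assms adj_sym in auto)
  then show False by simp
qed

text \<open>Were these seven vertices all of V, then b' and e' would each have three neighbours
  in N(v), hence a common one, which would have degree five.\<close>

lemma square_card_lt:
  assumes va: "E v a" "E v b" "E v c" "E v e" "distinct [a, b, c, e]"
    and sq: "E a b" "E b c" "E c e" "E e a"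
    and b': "E b b'" "b' \<noteq> v" "\<not> E v b'" and e': "E e e'" "e' \<noteq> v" "\<not> E v e'"
  shows "card {a, c, b', e', v, b, e} < card V"
proof (rule ccontr)
  let ?U = "{a, c, b', e', v, b, e}"
  assume "\<not> ?thesis"
  moreover have U: "?U \<subseteq> V" using va b' e' v_in_V adj_in_V by auto
  ultimately have "?U = V" using card_mono[OF finite_V U] by (intro card_subset_eq[OF finite_V U]) simp
  have Nv: "E v y \<longleftrightarrow> y \<in> {a, b, c, e}" for y
    by (rule adj_iff_four_adj) (use v_in_V va in auto)
  have "b' \<noteq> e'"
  proof
    assume "b' = e'"
    then have "card ?U \<le> 6" using card_length[of "[a, c, b', v, b, e]"] by simp
    then show False using \<open>?U = V\<close> seven_le_card_V by simp
  qed
  have two: "\<exists>p q. E v p \<and> E v q \<and> p \<noteq> q \<and> E x p \<and> E x q" if "E v x" for x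
    using that va sq by (auto simp: Nv intro: adj_sym)
  have no_common: "\<not> (E x b' \<and> E x e')" if vx: "E v x" for x
  proof
    assume x: "E x b' \<and> E x e'"
    obtain p q where pq: "E v p" "E v q" "p \<noteq> q" "E x p" "E x q" using two[OF vx] by blast
    have "b' = e'" using outer_neighbour_unique[OF vx pq _ b'(2,3) _ e'(2,3)] x by blast
    with \<open>b' \<noteq> e'\<close> show False by contradiction
  qed
  have out_adj: "{y. E w y} - {w'} \<subseteq> {y. E v y}" if "w \<in> {b', e'}" "w' \<in> {b', e'}" "w \<noteq> w'" for w w'
  proof
    fix y assume "y \<in> {y. E w y} - {w'}"
    then have "y \<in> V" "E w y" "y \<noteq> w'" using adj_in_V(2) by auto
    then show "y \<in> {y. E v y}"
      using that \<open>?U = V\<close> b' e' adj_irrefl adj_sym[of w v] by (auto simp: Nv)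
  qed
  let ?P = "{y. E b' y} - {e'}" and ?Q = "{y. E e' y} - {b'}"
  have "3 \<le> card ?P" "3 \<le> card ?Q"
    using card_neighbours adj_in_V(2)[OF b'(1)] adj_in_V(2)[OF e'(1)] finite_neighbours
    by (simp_all add: card_Diff_singleton_if)
  moreover have "card (?P \<union> ?Q) \<le> 4"
    using card_mono[OF finite_neighbours, of "?P \<union> ?Q" v] out_adj[of b' e'] out_adj[of e' b']
      \<open>b' \<noteq> e'\<close> card_neighbours[OF v_in_V] by auto
  moreover have "card ?P + card ?Q = card (?P \<union> ?Q) + card (?P \<inter> ?Q)"
    using finite_neighbours by (intro card_Un_Int) auto
  ultimately have "?P \<inter> ?Q \<noteq> {}" by force
  then obtain x where "E b' x" "E e' x" "x \<noteq> b'" "x \<noteq> e'" by blast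
  moreover have "E v x" using out_adj[of b' e'] \<open>b' \<noteq> e'\<close> calculation by blast
  ultimately show False using no_common adj_sym by blast
qed

lemma foresty_min_cut_square:
  assumes va: "E v a" "E v b" "E v c" "E v e" "distinct [a, b, c, e]"
    and sq: "E a b" "E b c" "E c e" "E e a"
  shows "\<exists>T. min_vertex_cut V E T \<and> foresty_vertex_cut V E T"
proof -
  obtain a' where a': "E a a'" "a' \<noteq> v" "\<not> E v a'" using obtain_outer_neighbour[OF va(1)] .
  obtain b' where b': "E b b'" "b' \<noteq> v" "\<not> E v b'" using obtain_outer_neighbour[OF va(2)] .
  obtain c' where c': "E c c'" "c' \<noteq> v" "\<not> E v c'" using obtain_outer_neighbour[OF va(3)] .
  obtain e' where e': "E e e'" "e' \<noteq> v" "\<not> E v e'" using obtain_outer_neighbour[OF va(4)] .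
  note adj = va a' b' c' e' sq adj_sym[OF sq(1)] adj_sym[OF sq(2)] adj_sym[OF sq(3)]
    adj_sym[OF sq(4)] adj_irrefl
  have Nv: "E v y \<longleftrightarrow> y \<in> {a, b, c, e}" for y
    by (rule adj_iff_four_adj) (use v_in_V adj in auto)
  have Na: "E a y \<longleftrightarrow> y \<in> {v, b, e, a'}" for y
    by (rule adj_iff_four_adj) (use adj adj_in_V in \<open>auto dest: adj_sym\<close>)
  have Nb: "E b y \<longleftrightarrow> y \<in> {v, a, c, b'}" for y
    by (rule adj_iff_four_adj) (use adj adj_in_V in \<open>auto dest: adj_sym\<close>)
  have Nc: "E c y \<longleftrightarrow> y \<in> {v, b, e, c'}" for y
    by (rule adj_iff_four_adj) (use adj adj_in_V in \<open>auto dest: adj_sym\<close>)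
  have Ne: "E e y \<longleftrightarrow> y \<in> {v, c, a, e'}" for y
    by (rule adj_iff_four_adj) (use adj adj_in_V in \<open>auto dest: adj_sym\<close>)
  have "min_vertex_cut V E {a, c, b', e'}"
  proof (rule min_vertex_cut_if_separates[where X = "{v, b, e}"])
    show "{a, c, b', e'} \<subseteq> V" "{v, b, e} \<subseteq> V - {a, c, b', e'}" using adj adj_in_V by auto
    show "card {a, c, b', e'} \<le> 4" using card_length[of "[a, c, b', e']"] by simp
    have "{a, c, b', e'} \<union> {v, b, e} = {a, c, b', e', v, b, e}" by auto
    then show "card ({a, c, b', e'} \<union> {v, b, e}) < card V"
      using square_card_lt[OF va sq b' e'] by simp
    show "\<And>x y. x \<in> {v, b, e} \<Longrightarrow> E x y \<Longrightarrow> y \<in> {v, b, e} \<union> {a, c, b', e'}"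
      using Nv Nb Ne by blast
  qed simp
  moreover have "forest {a, c, b', e'} (induced E {a, c, b', e'})"
  proof (rule forest_induced_if_degree_le_1_outside[of E "{b', e'}", OF adj_sym])
    have "y = a'" if "y \<in> {a, c, b', e'}" "E a y" for y
      using that va b' e' adj_irrefl by (auto simp: Na)
    moreover have "y = c'" if "y \<in> {a, c, b', e'}" "E c y" for y
      using that va b' e' adj_irrefl by (auto simp: Nc)
    ultimately show "\<And>x y z. x \<in> {a, c, b', e'} - {b', e'} \<Longrightarrow> y \<in> {a, c, b', e'} \<Longrightarrow>
        z \<in> {a, c, b', e'} \<Longrightarrow> E x y \<Longrightarrow> E x z \<Longrightarrow> y = z"
      by blast
    show "card {b', e'} \<le> 2" using card_length[of "[b', e']"] by simp
  qed simp_all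
  ultimately show ?thesis unfolding foresty_vertex_cut_def min_vertex_cut_def by blast
qed

lemma ex_foresty_min_cut: "\<exists>T. min_vertex_cut V E T \<and> foresty_vertex_cut V E T"
proof (cases "forest {y. E v y} (induced E {y. E v y})")
  case True
  then show ?thesis using min_cut unfolding foresty_vertex_cut_def min_vertex_cut_def by blast
next
  case False
  then obtain cs where "is_cycle {y. E v y} (induced E {y. E v y}) cs" unfolding forest_def by blast
  moreover have "finite {y. E v y}" "card {y. E v y} \<le> 4"
    using finite_neighbours card_neighbours[OF v_in_V] by simp_all
  ultimately show ?thesis
  proof (rule is_cycle_card_le_4_cases)
    fix a b c assume "distinct [a, b, c]" "induced E {y. E v y} a b" "induced E {y. E v y} b c"
      "induced E {y. E v y} c a"
    then show ?thesis using foresty_min_cut_triangle unfolding induced_def by auto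
  next
    fix a b c e assume "distinct [a, b, c, e]" "induced E {y. E v y} a b" "induced E {y. E v y} b c"
      "induced E {y. E v y} c e" "induced E {y. E v y} e a"
    then show ?thesis using foresty_min_cut_square unfolding induced_def by auto
  qed
qed

end

theorem lemma9:
  fixes V :: "'a set" and E :: "'a \<Rightarrow> 'a \<Rightarrow> bool"
  assumes "simple_graph V E"
    and "connected_graph V E"
    and "regular V E 4"
    and "card V \<ge> 7"
  shows "\<exists>S. min_vertex_cut V E S \<and> foresty_vertex_cut V E S"
proof -
  interpret four_regular V E using assms(1,3) by unfold_locales
  obtain v where "v \<in> V" using assms(4) by fastforce
  then have "vertex_cut V E {y. E v y}" using neighbourhood_vertex_cut assms(4) by simp
  then obtain S C where m: "min_vertex_cut V E S" and sd: "side V E S C"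
    and least: "\<And>S' C'. min_vertex_cut V E S' \<Longrightarrow> side V E S' C' \<Longrightarrow> card C \<le> card C'"
    by (rule obtain_min_cut_minimal_side) blast
  show ?thesis
  proof (cases "2 \<le> card C")
    case True
    then have "forest S (induced E S)" by (rule forest_min_cut_minimal_side[OF m sd _ least])
    then show ?thesis using m unfolding foresty_vertex_cut_def min_vertex_cut_def by blast
  next
    case False
    moreover have "finite C" "C \<noteq> {}" using sd finite_subset_V unfolding side_def by auto
    then have "card C \<noteq> 0" by simp
    ultimately have "card C = 1" by linarith
    then obtain w where "C = {w}" by (rule card_1_singletonE)
    with m sd assms(4) have "S = {y. E w y}" using min_cut_eq_neighbours by simp
    then interpret neighbourhood_cut V E w
      using m sd \<open>C = {w}\<close> assms(4) unfolding side_def by unfold_locales auto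
    show ?thesis by (rule ex_foresty_min_cut)
  qed
qed

end
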